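(* Let $\mathcal{H}=(C,F,D,G)$ be a hybrid system on $\mathcal{X}$ such that $F$ is outer semicontinuous, locally bounded, with nonempty convex values on $C$, and $G$ has nonempty values on $D$. Let $p$ be an atomic proposition such that $K:=\{x\in\mathcal{X}:p(x)=1\}$ is closed and $K\subset C\cup D$. Suppose there exist a continuously differentiable barrier function candidate $B:\mathcal{X}\to\mathbb{R}$ with respect to $K$ for $\mathcal{H}$ and an open neighborhood $U(\partial K)$ of $\partial K$ such that: (1) $\langle\nabla B(x),\eta\rangle\le0$ for all $x\in C\cap(U(\partial K)\setminus K)$ and all $\eta\in F(x)\cap T_C(x)$; (2) $B(\eta)\le0$ for all $x\in D\cap K$ and all $\eta\in G(x)$; (3) $G(D\cap K)\subset C\cup D$. Then for every solution $\phi$ to $\mathcal{H}$ with $\phi(0,0)\Vdash p$ and every $(t,j)\in\operatorname{dom}\phi$, $(\phi,(t,j))\models\Box p$.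
   Context: Hybrid systems. A hybrid system $\mathcal{H}=(C,F,D,G)$ on a state space $\mathcal{X}\subset\mathbb{R}^n$ is given by a flow set $C\subset\mathcal{X}$, a set-valued flow map $F:\mathcal{X}\rightrightarrows\mathcal{X}$, a jump set $D\subset\mathcal{X}$ and a set-valued jump map $G:\mathcal{X}\rightrightarrows\mathcal{X}$, and represents $\dot x\in F(x)$ for $x\in C$, $x^+\in G(x)$ for $x\in D$. Standing assumptions: $C\subset\operatorname{dom}F$, $D\subset\operatorname{dom}G$, $\overline{C}\cup D\cup G(D)\subset\mathcal{X}$ ($\overline C$ is the closure of $C$). A set $E\subset\mathbb{R}_{\ge0}\times\mathbb{N}$ is a hybrid time domain if for every $(T,J)\in E$ there are $0=t_0\le t_1\le\dots\le t_{J+1}$ with $E\cap([0,T]\times\{0,\dots,J\})=\bigcup_{j=0}^J([t_j,t_{j+1}]\times\{j\})$. A hybrid arc is a map $\phi:\operatorname{dom}\phi\to\mathbb{R}^n$ on a hybrid time domain such that for each $j$, $t\mapsto\phi(t,j)$ is locally absolutely continuous on $I^j=\{t:(t,j)\in\operatorname{dom}\phi\}$. A hybrid arc $\phi$ is a solution to $\mathcal{H}$ if (i) $\phi(0,0)\in\overline C\cup D$; (ii) for each $j$ such that $I^j$ has nonempty interior, $\phi(t,j)\in C$ for all $t\in\operatorname{int}I^j$ and $\dot\phi(t,j)\in F(\phi(t,j))$ for almost all $t\in I^j$; (iii) for each $(t,j)\in\operatorname{dom}\phi$ with $(t,j+1)\in\operatorname{dom}\phi$, $\phi(t,j)\in D$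 and $\phi(t,j+1)\in G(\phi(t,j))$. Temporal logic. An atomic proposition is a function $p:\mathcal{X}\to\{0,1\}$; write $\phi(t,j)\Vdash p$ if $p(\phi(t,j))=1$. $(\phi,(t,j))\models p$ iff $\phi(t,j)\Vdash p$; $(\phi,(t,j))\models\Box p$ iff $(\phi,(t',j'))\models p$ for all $(t',j')\in\operatorname{dom}\phi$ with $t'+j'\ge t+j$. The set $K$ is assumed nonempty. A function $B:\mathcal{X}\to\mathbb{R}$ is a barrier function candidate with respect to $K$ for $\mathcal{H}$ if $B(x)\le0$ for all $x\in K$ and $B(x)>0$ for all $x\in(C\cup D\cup G(D))\setminus K$. The tangent cone $T_C(x)$ of $C$ at $x$ is the set of $w$ for which there exist $x_i\in C$, $\tau_i>0$ with $x_i\to x$, $\tau_i\searrow0$ and $w=\lim_i (x_i-x)/\tau_i$. $\partial K$ is the boundary of $K$. *)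

theory Defs
  imports "HOL-Analysis.Analysis"
begin

definition sv_dom :: "('a \<Rightarrow> 'b set) \<Rightarrow> 'a set" where
  "sv_dom F = {x. F x \<noteq> {}}"

definition outer_semicontinuous_on ::
  "'a::real_normed_vector set \<Rightarrow> ('a \<Rightarrow> 'b::real_normed_vector set) \<Rightarrow> bool" where
  "outer_semicontinuous_on X F \<longleftrightarrow>
     (\<forall>x\<in>X. \<forall>xs ys y. (\<forall>i. xs i \<in> X) \<and> xs \<longlonglongrightarrow> x \<and>
        (\<forall>i. ys i \<in> F (xs i)) \<and> ys \<longlonglongrightarrow> y \<longrightarrow> y \<in> F x)"

definition locally_bounded_on ::
  "'a::real_normed_vector set \<Rightarrow> ('a \<Rightarrow> 'b::real_normed_vector set) \<Rightarrow> bool" where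
  "locally_bounded_on X F \<longleftrightarrow>
     (\<forall>x\<in>X. \<exists>V. open V \<and> x \<in> V \<and> bounded (\<Union> (F ` (V \<inter> X))))"

definition tangent_cone :: "'a::real_normed_vector set \<Rightarrow> 'a \<Rightarrow> 'a set" where
  "tangent_cone C x = {w. \<exists>xs \<tau>. (\<forall>i. xs i \<in> C) \<and> xs \<longlonglongrightarrow> x \<and>
      (\<forall>i. \<tau> i > (0::real)) \<and> decseq \<tau> \<and> \<tau> \<longlonglongrightarrow> 0 \<and>
      (\<lambda>i. (1 / \<tau> i) *\<^sub>R (xs i - x)) \<longlonglongrightarrow> w}"

definition hybrid_time_domain :: "(real \<times> nat) set \<Rightarrow> bool" where
  "hybrid_time_domain E \<longleftrightarrow>
     (\<forall>(T, J)\<in>E. \<exists>t :: nat \<Rightarrow> real. t 0 = 0 \<and> (\<forall>j\<le>J. t j \<le> t (Suc j)) \<and>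
        E \<inter> ({0..T} \<times> {0..J}) = (\<Union>j\<in>{0..J}. {t j..t (Suc j)} \<times> {j}))"

definition time_slice :: "(real \<times> nat) set \<Rightarrow> nat \<Rightarrow> real set" where
  "time_slice E j = {t. (t, j) \<in> E}"

definition abs_continuous_on_interval ::
  "(real \<Rightarrow> 'a::real_normed_vector) \<Rightarrow> real \<Rightarrow> real \<Rightarrow> bool" where
  "abs_continuous_on_interval f a b \<longleftrightarrow>
     (\<forall>\<epsilon>>0. \<exists>\<delta>>0. \<forall>(n::nat) (l::nat \<Rightarrow> real) u.
        (\<forall>i<n. a \<le> l i \<and> l i \<le> u i \<and> u i \<le> b) \<and>
        (\<forall>i<n. \<forall>k<n. i \<noteq> k \<longrightarrow> u i \<le> l k \<or> u k \<le> l i) \<and>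
        (\<Sum>i<n. u i - l i) < \<delta>
        \<longrightarrow> (\<Sum>i<n. norm (f (u i) - f (l i))) < \<epsilon>)"

definition locally_abs_continuous_on :: "real set \<Rightarrow> (real \<Rightarrow> 'a::real_normed_vector) \<Rightarrow> bool" where
  "locally_abs_continuous_on I f \<longleftrightarrow>
     (\<forall>a b. a \<le> b \<and> {a..b} \<subseteq> I \<longrightarrow> abs_continuous_on_interval f a b)"

text \<open>A hybrid arc is a function phi defined on the hybrid time domain E
  (values outside E are irrelevant).\<close>
definition hybrid_arc :: "(real \<times> nat) set \<Rightarrow> (real \<Rightarrow> nat \<Rightarrow> 'a::real_normed_vector) \<Rightarrow> bool" where
  "hybrid_arc E \<phi> \<longleftrightarrow> hybrid_time_domain E \<and>
     (\<forall>j. locally_abs_continuous_on (time_slice E j) (\<lambda>t. \<phi> t j))"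

definition is_solution ::
  "'a::euclidean_space set \<Rightarrow> ('a \<Rightarrow> 'a set) \<Rightarrow> 'a set \<Rightarrow> ('a \<Rightarrow> 'a set) \<Rightarrow>
   (real \<times> nat) set \<Rightarrow> (real \<Rightarrow> nat \<Rightarrow> 'a) \<Rightarrow> bool" where
  "is_solution C F D G E \<phi> \<longleftrightarrow>
     hybrid_arc E \<phi> \<and>
     \<phi> 0 0 \<in> closure C \<union> D \<and>
     (\<forall>j. interior (time_slice E j) \<noteq> {} \<longrightarrow>
        (\<forall>t\<in>interior (time_slice E j). \<phi> t j \<in> C) \<and>
        (\<exists>N. negligible N \<and>
           (\<forall>t\<in>time_slice E j - N. \<exists>v.
              ((\<lambda>s. \<phi> s j) has_vector_derivative v) (at t within time_slice E j) \<and>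
              v \<in> F (\<phi> t j)))) \<and>
     (\<forall>t j. (t, j) \<in> E \<and> (t, Suc j) \<in> E \<longrightarrow>
        \<phi> t j \<in> D \<and> \<phi> t (Suc j) \<in> G (\<phi> t j))"

text \<open>Atomic propositions p : X \<rightarrow> {0,1} are encoded as predicates
  ('p x' means p(x) = 1).\<close>
definition models_always ::
  "(real \<times> nat) set \<Rightarrow> (real \<Rightarrow> nat \<Rightarrow> 'a) \<Rightarrow> real \<times> nat \<Rightarrow> ('a \<Rightarrow> bool) \<Rightarrow> bool" where
  "models_always E \<phi> tj p \<longleftrightarrow>
     (\<forall>(t', j')\<in>E. t' + real j' \<ge> fst tj + real (snd tj) \<longrightarrow> p (\<phi> t' j'))"

definition barrier_candidate ::
  "'a set \<Rightarrow> 'a set \<Rightarrow> ('a \<Rightarrow> 'a set) \<Rightarrow> 'a set \<Rightarrow> ('a \<Rightarrow> real) \<Rightarrow> bool" where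
  "barrier_candidate C D G K B \<longleftrightarrow>
     (\<forall>x\<in>K. B x \<le> 0) \<and>
     (\<forall>x\<in>(C \<union> D \<union> \<Union>(G ` D)) - K. B x > 0)"

definition C1_with_gradient :: "'a::euclidean_space set \<Rightarrow> ('a \<Rightarrow> real) \<Rightarrow> ('a \<Rightarrow> 'a) \<Rightarrow> bool" where
  "C1_with_gradient X B gradB \<longleftrightarrow>
     (\<exists>W. open W \<and> X \<subseteq> W \<and>
        (\<forall>x\<in>W. (B has_derivative (\<lambda>h. gradB x \<bullet> h)) (at x)) \<and>
        continuous_on W gradB)"

end

theory Submission
  imports Defs
begin

text \<open>
  While the solution flows outside K near its boundary, B does not increase: its derivative
  is the gradient paired with a velocity in F which, as the flow stays in C, also lies in the
  tangent cone of C. A flow leaving K would therefore cross the boundary at some time with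
  B \<le> 0 and shortly afterwards reach a point of C outside K, where B > 0. Jumps from K land
  in C or D with B \<le> 0, hence again in K. Since flows are only absolutely continuous, B is
  differentiable along them only almost everywhere; monotonicity then follows from the fact
  that absolutely continuous functions map compact null sets to null sets.
\<close>

definition nonoverlapping_intervals_in :: "real \<Rightarrow> real \<Rightarrow> nat \<Rightarrow> (nat \<Rightarrow> real) \<Rightarrow> (nat \<Rightarrow> real) \<Rightarrow> bool" where
  "nonoverlapping_intervals_in a b n l u \<longleftrightarrow>
     (\<forall>i<n. a \<le> l i \<and> l i \<le> u i \<and> u i \<le> b) \<and>
     (\<forall>i<n. \<forall>k<n. i \<noteq> k \<longrightarrow> u i \<le> l k \<or> u k \<le> l i)"

lemma abs_continuous_on_interval_iff:
  "abs_continuous_on_interval f a b \<longleftrightarrow>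
     (\<forall>\<epsilon>>0. \<exists>\<delta>>0. \<forall>n l u. nonoverlapping_intervals_in a b n l u \<and> (\<Sum>i<n. u i - l i) < \<delta>
        \<longrightarrow> (\<Sum>i<n. norm (f (u i) - f (l i))) < \<epsilon>)"
  unfolding abs_continuous_on_interval_def nonoverlapping_intervals_in_def by (simp only: conj_assoc)

lemma abs_continuous_on_intervalE:
  assumes "abs_continuous_on_interval f a b" "\<epsilon> > 0"
  obtains \<delta> where "\<delta> > 0"
    "\<And>n l u. nonoverlapping_intervals_in a b n l u \<Longrightarrow> (\<Sum>i<n. u i - l i) < \<delta> \<Longrightarrow>
       (\<Sum>i<n. norm (f (u i) - f (l i))) < \<epsilon>"
  using assms unfolding abs_continuous_on_interval_iff by (elim allE[of _ \<epsilon>] impE exE conjE) (blast intro: that)+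

lemma abs_continuous_on_interval_imp_continuous_on:
  fixes f :: "real \<Rightarrow> 'a::real_normed_vector"
  assumes "abs_continuous_on_interval f a b"
  shows "continuous_on {a..b} f"
  unfolding continuous_on_iff
proof (intro ballI allI impI)
  fix x and \<epsilon> :: real assume x: "x \<in> {a..b}" and "0 < \<epsilon>"
  obtain \<delta> where "\<delta> > 0" and \<delta>: "\<And>n l u. nonoverlapping_intervals_in a b n l u \<Longrightarrow>
      (\<Sum>i<n. u i - l i) < \<delta> \<Longrightarrow> (\<Sum>i<n. norm (f (u i) - f (l i))) < \<epsilon>"
    using abs_continuous_on_intervalE[OF assms \<open>0 < \<epsilon>\<close>] by blast
  have "dist (f y) (f x) < \<epsilon>" if y: "y \<in> {a..b}" "dist y x < \<delta>" for y
  proof -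
    have "norm (f (max x y) - f (min x y)) < \<epsilon>"
      using \<delta>[of 1 "\<lambda>_. min x y" "\<lambda>_. max x y"] x y
      by (auto simp: nonoverlapping_intervals_in_def dist_real_def)
    then show ?thesis
      by (cases "x \<le> y") (simp_all add: dist_norm norm_minus_commute[of "f y"] max_def min_def)
  qed
  with \<open>\<delta> > 0\<close> show "\<exists>\<delta>>0. \<forall>y\<in>{a..b}. dist y x < \<delta> \<longrightarrow> dist (f y) (f x) < \<epsilon>" by blast
qed

lemma abs_continuous_on_interval_add_linear:
  fixes h :: "real \<Rightarrow> real"
  assumes "abs_continuous_on_interval h a b"
  shows "abs_continuous_on_interval (\<lambda>t. h t + c * t) a b"
  unfolding abs_continuous_on_interval_iff
proof (intro allI impI)
  fix \<epsilon> :: real assume "\<epsilon> > 0"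
  obtain \<delta> where "\<delta> > 0" and \<delta>: "\<And>n l u. nonoverlapping_intervals_in a b n l u \<Longrightarrow>
      (\<Sum>i<n. u i - l i) < \<delta> \<Longrightarrow> (\<Sum>i<n. norm (h (u i) - h (l i))) < \<epsilon> / 2"
    using abs_continuous_on_intervalE[OF assms, of "\<epsilon> / 2"] \<open>\<epsilon> > 0\<close> by auto
  define \<delta>' where "\<delta>' = min \<delta> (\<epsilon> / (2 * (\<bar>c\<bar> + 1)))"
  have "(\<Sum>i<n. norm (h (u i) + c * u i - (h (l i) + c * l i))) < \<epsilon>"
    if I: "nonoverlapping_intervals_in a b n l u" and len: "(\<Sum>i<n. u i - l i) < \<delta>'" for n l u
  proof -
    have lu: "l i \<le> u i" if "i < n" for i
      using I that by (auto simp: nonoverlapping_intervals_in_def)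
    have "(\<Sum>i<n. norm (h (u i) + c * u i - (h (l i) + c * l i)))
        \<le> (\<Sum>i<n. norm (h (u i) - h (l i))) + \<bar>c\<bar> * (\<Sum>i<n. u i - l i)"
    proof -
      have "norm (h (u i) + c * u i - (h (l i) + c * l i)) \<le> norm (h (u i) - h (l i)) + \<bar>c\<bar> * (u i - l i)"
        if "i < n" for i
      proof -
        have "norm (h (u i) + c * u i - (h (l i) + c * l i)) \<le> norm (h (u i) - h (l i)) + norm (c * (u i - l i))"
          by (metis (no_types) add_diff_add norm_triangle_ineq right_diff_distrib)
        then show ?thesis
          using lu[OF that] by (simp add: abs_mult)
      qed
      then show ?thesis
        unfolding sum_distrib_left sum.distrib[symmetric] by (intro sum_mono) simp
    qed
    also have "\<bar>c\<bar> * (\<Sum>i<n. u i - l i) \<le> \<bar>c\<bar> * (\<epsilon> / (2 * (\<bar>c\<bar> + 1)))"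
      using len by (intro mult_left_mono) (auto simp: \<delta>'_def)
    also have "\<dots> < \<epsilon> / 2"
      using \<open>\<epsilon> > 0\<close> by (simp add: field_simps)
    finally show ?thesis
      using \<delta>[OF I] len by (simp add: \<delta>'_def)
  qed
  moreover have "\<delta>' > 0"
    using \<open>\<delta> > 0\<close> \<open>\<epsilon> > 0\<close> by (simp add: \<delta>'_def)
  ultimately show "\<exists>\<delta>>0. \<forall>n l u. nonoverlapping_intervals_in a b n l u \<and> (\<Sum>i<n. u i - l i) < \<delta> \<longrightarrow>
      (\<Sum>i<n. norm (h (u i) + c * u i - (h (l i) + c * l i))) < \<epsilon>"
    by blast
qed

lemma abs_continuous_on_interval_compose_lipschitz:
  fixes f :: "real \<Rightarrow> 'a::real_normed_vector" and g :: "'a \<Rightarrow> 'b::real_normed_vector"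
  assumes f: "abs_continuous_on_interval f a b" and "f ` {a..b} \<subseteq> S" and g: "M-lipschitz_on S g"
  shows "abs_continuous_on_interval (\<lambda>t. g (f t)) a b"
  unfolding abs_continuous_on_interval_iff
proof (intro allI impI)
  fix \<epsilon> :: real assume "\<epsilon> > 0"
  have M: "M \<ge> 0"
    using g by (rule lipschitz_on_nonneg)
  obtain \<delta> where "\<delta> > 0" and \<delta>: "\<And>n l u. nonoverlapping_intervals_in a b n l u \<Longrightarrow>
      (\<Sum>i<n. u i - l i) < \<delta> \<Longrightarrow> (\<Sum>i<n. norm (f (u i) - f (l i))) < \<epsilon> / (M + 1)"
    using abs_continuous_on_intervalE[OF f, of "\<epsilon> / (M + 1)"] \<open>\<epsilon> > 0\<close> M by auto
  have "(\<Sum>i<n. norm (g (f (u i)) - g (f (l i)))) < \<epsilon>"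
    if I: "nonoverlapping_intervals_in a b n l u" and len: "(\<Sum>i<n. u i - l i) < \<delta>" for n l u
  proof -
    have "norm (g (f (u i)) - g (f (l i))) \<le> M * norm (f (u i) - f (l i))" if "i < n" for i
    proof -
      have "u i \<in> {a..b}" "l i \<in> {a..b}"
        using I that by (auto simp: nonoverlapping_intervals_in_def)
      then have "f (u i) \<in> S" "f (l i) \<in> S"
        using \<open>f ` {a..b} \<subseteq> S\<close> by auto
      then show ?thesis
        using lipschitz_onD[OF g] by (simp add: dist_norm)
    qed
    then have "(\<Sum>i<n. norm (g (f (u i)) - g (f (l i)))) \<le> M * (\<Sum>i<n. norm (f (u i) - f (l i)))"
      unfolding sum_distrib_left by (intro sum_mono) simp
    also have "\<dots> \<le> (M + 1) * (\<Sum>i<n. norm (f (u i) - f (l i)))"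
      by (intro mult_right_mono sum_nonneg) auto
    also have "\<dots> < (M + 1) * (\<epsilon> / (M + 1))"
      using \<delta>[OF I len] M by (intro mult_strict_left_mono) auto
    finally show ?thesis
      using M by simp
  qed
  with \<open>\<delta> > 0\<close> show "\<exists>\<delta>>0. \<forall>n l u. nonoverlapping_intervals_in a b n l u \<and> (\<Sum>i<n. u i - l i) < \<delta> \<longrightarrow>
      (\<Sum>i<n. norm (g (f (u i)) - g (f (l i)))) < \<epsilon>"
    by blast
qed

lemma negligible_imp_open_cover:
  assumes "negligible S" "e > 0"
  obtains T where "open T" "S \<subseteq> T" "T \<in> lmeasurable" "measure lebesgue T < e"
proof -
  obtain T where T: "open T" "S \<subseteq> T" "T - S \<in> lmeasurable" "emeasure lebesgue (T - S) < ennreal e"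
    using sets_lebesgue_outer_open[OF negligible_imp_sets[OF \<open>negligible S\<close>] \<open>e > 0\<close>] by blast
  have TS: "T = (T - S) \<union> S"
    using T(2) by blast
  have "T \<in> lmeasurable"
    using T(3) negligible_imp_measurable[OF \<open>negligible S\<close>] by (subst TS) (rule fmeasurable.Un)
  moreover have "measure lebesgue T \<le> measure lebesgue (T - S) + measure lebesgue S"
    using T(3) negligible_imp_measurable[OF \<open>negligible S\<close>]
    by (subst TS) (intro measure_Un_le; auto)
  moreover have "measure lebesgue (T - S) < e"
    using T(3,4) \<open>e > 0\<close> by (simp add: emeasure_eq_measure2 ennreal_less_iff)
  ultimately show thesis
    using T(1,2) negligible_imp_measure0[OF \<open>negligible S\<close>] that by force
qed

lemma interval_grid_cover:
  fixes w :: real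
  assumes "w \<ge> 0" "0 < M" "a \<le> t" "t \<le> a + real M * w"
  obtains k where "k < M" "a + real k * w \<le> t" "t \<le> a + real (Suc k) * w"
proof -
  have "\<exists>k<m. a + real k * w \<le> t \<and> t \<le> a + real (Suc k) * w" if "0 < m" "t \<le> a + real m * w" for m
    using that
  proof (induction m)
    case (Suc m)
    show ?case
    proof (cases "0 < m \<and> t \<le> a + real m * w")
      case True
      then show ?thesis using Suc.IH by (meson less_SucI)
    next
      case False
      then have "a + real m * w \<le> t"
        using \<open>a \<le> t\<close> by auto
      with Suc.prems show ?thesis by blast
    qed
  qed simp
  with assms that show thesis by blast
qed

lemma grid_cells_measure_le:
  fixes w :: real
  assumes "w \<ge> 0" "finite S" "T \<in> lmeasurable"
    and cells: "\<And>k. k \<in> S \<Longrightarrow> {a + real k * w..a + real (Suc k) * w} \<subseteq> T"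
  shows "real (card S) * w \<le> measure lebesgue T"
proof -
  define cell where "cell k = {a + real k * w..a + real (Suc k) * w}" for k
  have "pairwise (\<lambda>i k. negligible (cell i \<inter> cell k)) S"
  proof -
    have "cell i \<inter> cell k \<subseteq> {a + real k * w}" if "i < k" for i k
      using mult_right_mono[of "real (Suc i)" "real k" w] that \<open>w \<ge> 0\<close> by (auto simp: cell_def)
    then show ?thesis
      unfolding pairwise_def by (metis Int_commute linorder_neqE_nat negligible_sing negligible_subset)
  qed
  then have "measure lebesgue (\<Union>k\<in>S. cell k) = (\<Sum>k\<in>S. measure lebesgue (cell k))"
    using \<open>finite S\<close> by (intro measure_negligible_finite_Union_image) (auto simp: cell_def)
  also have "\<dots> = real (card S) * w"
    using \<open>w \<ge> 0\<close> by (simp add: cell_def algebra_simps)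
  finally have "real (card S) * w = measure lebesgue (\<Union>k\<in>S. cell k)" ..
  also have "\<dots> \<le> measure lebesgue T"
    using cells \<open>T \<in> lmeasurable\<close> by (intro measure_mono_fmeasurable) (auto simp: cell_def)
  finally show ?thesis .
qed

lemma nonoverlapping_grid_cells:
  fixes w :: real
  assumes "w \<ge> 0" "a + real M * w = b"
  shows "nonoverlapping_intervals_in a b M (\<lambda>k. a + real k * w)
    (\<lambda>k. if k \<in> S then a + real (Suc k) * w else a + real k * w)"
    (is "nonoverlapping_intervals_in a b M ?c ?u")
proof -
  have c_mono: "?c i \<le> ?c k" if "i \<le> k" for i k
    using that \<open>w \<ge> 0\<close> by (simp add: mult_right_mono)
  have c_in: "a \<le> ?c k" "?c k \<le> b" if "k \<le> M" for k
    using c_mono[OF that] c_mono[of 0 k] assms(2) by auto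
  show ?thesis
    unfolding nonoverlapping_intervals_in_def
  proof (intro conjI allI impI)
    fix i assume "i < M"
    then show "a \<le> ?c i" "?c i \<le> ?u i" "?u i \<le> b"
      using c_in[of i] c_in[of "Suc i"] c_mono[of i "Suc i"] by auto
  next
    fix i k assume "i < M" "k < M" "i \<noteq> k"
    have "?u i \<le> ?c k" if "i < k" for i k
      using c_mono[of i "Suc i"] c_mono[of "Suc i" k] that by auto
    then show "?u i \<le> ?c k \<or> ?u k \<le> ?c i"
      using \<open>i \<noteq> k\<close> by (meson linorder_neqE_nat)
  qed
qed

lemma negligible_compact_nonoverlapping_cover:
  assumes "compact Q" "negligible Q" "Q \<subseteq> {a..b}" "a < b" "\<delta> > 0"
  obtains n l u where "nonoverlapping_intervals_in a b n l u" "(\<Sum>i<n. u i - l i) < \<delta>"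
    "Q \<subseteq> (\<Union>i<n. {l i..u i})"
proof -
  obtain T where "open T" "Q \<subseteq> T" "T \<in> lmeasurable" and mT: "measure lebesgue T < \<delta>"
    using negligible_imp_open_cover[OF \<open>negligible Q\<close> \<open>\<delta> > 0\<close>] by blast
  then obtain r where "r > 0" and r: "(\<Union>x\<in>Q. ball x r) \<subseteq> T"
    using compact_subset_open_imp_ball_epsilon_subset[OF \<open>compact Q\<close>] by metis
  obtain M :: nat where M: "(b - a) / r < real M"
    using reals_Archimedean2 by blast
  then have "M > 0"
    using \<open>a < b\<close> \<open>r > 0\<close> by (auto intro!: Nat.gr0I simp: field_simps)
  define w where "w = (b - a) / real M"
  have "w > 0" "w < r" and aMw: "a + real M * w = b"
    using \<open>a < b\<close> \<open>M > 0\<close> \<open>r > 0\<close> M by (auto simp: w_def field_simps)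
  \<comment> \<open>Grid cells are shorter than \<open>r\<close>, so the cells meeting \<open>Q\<close> lie in \<open>T\<close>.\<close>
  define c where "c k = a + real k * w" for k
  define S where "S = {k\<in>{..<M}. Q \<inter> {c k..c (Suc k)} \<noteq> {}}"
  define u where "u k = (if k \<in> S then c (Suc k) else c k)" for k
  have "nonoverlapping_intervals_in a b M c u"
    using nonoverlapping_grid_cells[of w a M b S] \<open>w > 0\<close> aMw unfolding c_def u_def by simp
  moreover have "(\<Sum>k<M. u k - c k) < \<delta>"
  proof -
    have cell_T: "{c k..c (Suc k)} \<subseteq> T" if "k \<in> S" for k
    proof
      fix t assume t: "t \<in> {c k..c (Suc k)}"
      obtain q where "q \<in> Q" "q \<in> {c k..c (Suc k)}"
        using \<open>k \<in> S\<close> unfolding S_def by blast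
      with t have "dist q t < r"
        using \<open>w < r\<close> by (auto simp: c_def dist_real_def algebra_simps)
      then show "t \<in> T"
        using r \<open>q \<in> Q\<close> by (meson UN_subset_iff mem_ball subsetD)
    qed
    have "(\<Sum>k<M. u k - c k) = (\<Sum>k<M. if k \<in> S then w else 0)"
      by (intro sum.cong) (auto simp: u_def c_def algebra_simps)
    also have "\<dots> = (\<Sum>k\<in>{..<M} \<inter> S. w)"
      by (rule sum.inter_restrict[symmetric]) simp
    also have "{..<M} \<inter> S = S"
      by (auto simp: S_def)
    finally have "(\<Sum>k<M. u k - c k) = real (card S) * w"
      by simp
    moreover have "real (card S) * w \<le> measure lebesgue T"
      using grid_cells_measure_le[of w S T a] \<open>w > 0\<close> cell_T \<open>T \<in> lmeasurable\<close>
      unfolding c_def by (simp add: S_def)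
    ultimately show ?thesis
      using mT by linarith
  qed
  moreover have "Q \<subseteq> (\<Union>k<M. {c k..u k})"
  proof
    fix t assume "t \<in> Q"
    then have "a \<le> t" "t \<le> a + real M * w"
      using \<open>Q \<subseteq> {a..b}\<close> aMw by auto
    then obtain k where "k < M" "c k \<le> t" "t \<le> c (Suc k)"
      using interval_grid_cover[of w M a t] \<open>w > 0\<close> \<open>M > 0\<close> unfolding c_def by auto
    moreover have "k \<in> S"
      using \<open>k < M\<close> \<open>t \<in> Q\<close> calculation unfolding S_def by auto
    ultimately show "t \<in> (\<Union>k<M. {c k..u k})"
      unfolding u_def by auto
  qed
  ultimately show thesis
    using that by blast
qed

lemma nonoverlapping_intervals_in_shrink:
  assumes "nonoverlapping_intervals_in a b n l u"
    and "\<And>i. i < n \<Longrightarrow> l i \<le> l' i \<and> l' i \<le> u' i \<and> u' i \<le> u i"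
  shows "nonoverlapping_intervals_in a b n l' u'" "(\<Sum>i<n. u' i - l' i) \<le> (\<Sum>i<n. u i - l i)"
proof -
  show "nonoverlapping_intervals_in a b n l' u'"
    unfolding nonoverlapping_intervals_in_def
  proof (intro conjI allI impI)
    fix i k assume "i < n" "k < n" "i \<noteq> k"
    then have "u i \<le> l k \<or> u k \<le> l i"
      using assms(1) by (auto simp: nonoverlapping_intervals_in_def)
    then show "u' i \<le> l' k \<or> u' k \<le> l' i"
      using assms(2)[OF \<open>i < n\<close>] assms(2)[OF \<open>k < n\<close>] by linarith
  qed (use assms in \<open>fastforce simp: nonoverlapping_intervals_in_def\<close>)+
  show "(\<Sum>i<n. u' i - l' i) \<le> (\<Sum>i<n. u i - l i)"
    using assms(2) by (intro sum_mono) fastforce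
qed

lemma continuous_on_Icc_family_extrema:
  fixes h :: "real \<Rightarrow> 'b::linorder_topology"
  assumes "\<And>i. i < n \<Longrightarrow> l i \<le> u i" "\<And>i. i < n \<Longrightarrow> continuous_on {l i..u i} h"
  obtains p q where "\<And>i. i < n \<Longrightarrow> p i \<in> {l i..u i} \<and> q i \<in> {l i..u i}"
    "\<And>i t. i < n \<Longrightarrow> t \<in> {l i..u i} \<Longrightarrow> h (p i) \<le> h t \<and> h t \<le> h (q i)"
proof -
  have ex: "\<forall>i\<in>{..<n}. \<exists>pq. fst pq \<in> {l i..u i} \<and> snd pq \<in> {l i..u i} \<and>
      (\<forall>t\<in>{l i..u i}. h (fst pq) \<le> h t \<and> h t \<le> h (snd pq))"
  proof
    fix i assume "i \<in> {..<n}"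
    then have "{l i..u i} \<noteq> {}" "continuous_on {l i..u i} h"
      using assms by auto
    then obtain x y where "x \<in> {l i..u i}" "\<forall>t\<in>{l i..u i}. h x \<le> h t"
      and "y \<in> {l i..u i}" "\<forall>t\<in>{l i..u i}. h t \<le> h y"
      using continuous_attains_inf[OF compact_Icc] continuous_attains_sup[OF compact_Icc] by blast
    then show "\<exists>pq. fst pq \<in> {l i..u i} \<and> snd pq \<in> {l i..u i} \<and>
        (\<forall>t\<in>{l i..u i}. h (fst pq) \<le> h t \<and> h t \<le> h (snd pq))"
      by (intro exI[of _ "(x, y)"]) simp
  qed
  then obtain pq where pq: "\<forall>i\<in>{..<n}. fst (pq i) \<in> {l i..u i} \<and> snd (pq i) \<in> {l i..u i} \<and>
      (\<forall>t\<in>{l i..u i}. h (fst (pq i)) \<le> h t \<and> h t \<le> h (snd (pq i)))"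
    using bchoice[OF ex] by (elim exE) (rule that)
  show thesis
    by (rule that[of "\<lambda>i. fst (pq i)" "\<lambda>i. snd (pq i)"]) (use pq in auto)
qed

lemma negligible_abs_continuous_image:
  fixes h :: "real \<Rightarrow> real"
  assumes h: "abs_continuous_on_interval h a b"
    and "compact Q" "negligible Q" "Q \<subseteq> {a..b}" "a < b"
  shows "negligible (h ` Q)"
  unfolding negligible_outer_le
proof (intro allI impI)
  fix \<epsilon> :: real assume "\<epsilon> > 0"
  obtain \<delta> where "\<delta> > 0" and \<delta>: "\<And>n l u. nonoverlapping_intervals_in a b n l u \<Longrightarrow>
      (\<Sum>i<n. u i - l i) < \<delta> \<Longrightarrow> (\<Sum>i<n. norm (h (u i) - h (l i))) < \<epsilon>"
    using abs_continuous_on_intervalE[OF h \<open>\<epsilon> > 0\<close>] by blast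
  obtain n l u where I: "nonoverlapping_intervals_in a b n l u" and len: "(\<Sum>i<n. u i - l i) < \<delta>"
    and cover: "Q \<subseteq> (\<Union>i<n. {l i..u i})"
    using negligible_compact_nonoverlapping_cover[OF assms(2-5) \<open>\<delta> > 0\<close>] by blast
  have lu: "a \<le> l i" "l i \<le> u i" "u i \<le> b" if "i < n" for i
    using I that by (auto simp: nonoverlapping_intervals_in_def)
  have "continuous_on {l i..u i} h" if "i < n" for i
    by (rule continuous_on_subset[OF abs_continuous_on_interval_imp_continuous_on[OF h]])
      (use lu[OF that] in auto)
  then obtain p q where pq_in: "\<And>i. i < n \<Longrightarrow> p i \<in> {l i..u i} \<and> q i \<in> {l i..u i}"
    and pq: "\<And>i t. i < n \<Longrightarrow> t \<in> {l i..u i} \<Longrightarrow> h (p i) \<le> h t \<and> h t \<le> h (q i)"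
    using continuous_on_Icc_family_extrema[of n l u h] lu(2) by metis
  have h_pq: "h (p i) \<le> h (q i)" if "i < n" for i
    using pq[OF that] pq_in[OF that] by blast
  have "\<And>i. i < n \<Longrightarrow> l i \<le> min (p i) (q i) \<and> min (p i) (q i) \<le> max (p i) (q i) \<and> max (p i) (q i) \<le> u i"
    using pq_in by auto
  note shrink = nonoverlapping_intervals_in_shrink[OF I this]
  have "(\<Sum>i<n. norm (h (max (p i) (q i)) - h (min (p i) (q i)))) < \<epsilon>"
    using shrink len by (intro \<delta>) auto
  moreover have "(\<Sum>i<n. norm (h (max (p i) (q i)) - h (min (p i) (q i)))) = (\<Sum>i<n. h (q i) - h (p i))"
    using h_pq by (intro sum.cong) (auto simp: max_def min_def)
  moreover have "measure lebesgue (\<Union>i<n. {h (p i)..h (q i)}) \<le> (\<Sum>i<n. h (q i) - h (p i))"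
    using measure_UNION_le[of "{..<n}" "\<lambda>i. {h (p i)..h (q i)}" lebesgue] h_pq by simp
  moreover have "h ` Q \<subseteq> (\<Union>i<n. {h (p i)..h (q i)})"
    using cover pq by fastforce
  ultimately show "\<exists>T. h ` Q \<subseteq> T \<and> T \<in> lmeasurable \<and> measure lebesgue T \<le> \<epsilon>"
    by (intro exI[of _ "\<Union>i<n. {h (p i)..h (q i)}"]) (auto intro: fmeasurable.finite_UN)
qed

lemma continuous_on_last_crossing:
  fixes g :: "real \<Rightarrow> real"
  assumes g: "continuous_on {a..b} g" and "a \<le> b" "g a \<le> y" "y \<le> g b"
  obtains s where "s \<in> {a..b}" "g s = y" "\<And>t. t \<in> {s<..b} \<Longrightarrow> y < g t"
proof -
  define P where "P = {t\<in>{a..b}. g t \<le> y}"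
  have "closed P"
    unfolding P_def by (intro continuous_on_closed_Collect_le g continuous_on_const closed_atLeastAtMost)
  moreover have "a \<in> P" "bdd_above P"
    using assms by (auto simp: P_def intro: bdd_aboveI[of _ b])
  ultimately have "Sup P \<in> P" and Sup_upper: "\<And>t. t \<in> P \<Longrightarrow> t \<le> Sup P"
    using closed_contains_Sup cSup_upper by blast+
  then have s: "Sup P \<in> {a..b}" "g (Sup P) \<le> y"
    by (auto simp: P_def)
  then obtain x where x: "Sup P \<le> x" "x \<le> b" "g x = y"
    using IVT'[of g "Sup P" y b] continuous_on_subset[OF g] \<open>y \<le> g b\<close> by auto
  then have "x = Sup P"
    using s Sup_upper[of x] by (auto simp: P_def)
  moreover have "y < g t" if "t \<in> {Sup P<..b}" for t
    using that s Sup_upper[of t] by (force simp: P_def)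
  ultimately show thesis
    using that s x by blast
qed

lemma closed_right_minima:
  fixes g :: "real \<Rightarrow> real"
  assumes "continuous_on {a..b} g"
  shows "closed {q\<in>{a..b}. \<forall>t\<in>{q..b}. g q \<le> g t}"
proof -
  have "{q\<in>{a..b}. \<forall>t\<in>{q..b}. g q \<le> g t} = {a..b} \<inter> (\<Inter>t\<in>{a..b}. {t..} \<union> {q\<in>{a..b}. g q \<le> g t})"
  proof (intro set_eqI iffI)
    fix q assume q: "q \<in> {q\<in>{a..b}. \<forall>t\<in>{q..b}. g q \<le> g t}"
    have "q \<in> {t..} \<union> {q\<in>{a..b}. g q \<le> g t}" if "t \<in> {a..b}" for t
      using q that by (cases "t \<le> q") auto
    with q show "q \<in> {a..b} \<inter> (\<Inter>t\<in>{a..b}. {t..} \<union> {q\<in>{a..b}. g q \<le> g t})"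
      by blast
  next
    fix q assume q: "q \<in> {a..b} \<inter> (\<Inter>t\<in>{a..b}. {t..} \<union> {q\<in>{a..b}. g q \<le> g t})"
    have "g q \<le> g t" if "t \<in> {q..b}" for t
    proof (cases "t = q")
      case False
      have "t \<in> {a..b}"
        using that q by auto
      then have "q \<in> {t..} \<or> g q \<le> g t"
        using q by blast
      with False that show ?thesis
        by auto
    qed simp
    with q show "q \<in> {q\<in>{a..b}. \<forall>t\<in>{q..b}. g q \<le> g t}"
      by blast
  qed
  then show ?thesis
    by (simp only:) (intro closed_Int closed_INT closed_Un ballI closed_atLeastAtMost closed_atLeast
        continuous_on_closed_Collect_le[OF assms continuous_on_const closed_atLeastAtMost])
qed

lemma negative_derivative_imp_smaller_right:
  fixes g :: "real \<Rightarrow> real"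
  assumes "(g has_real_derivative d) (at q)" "d < 0" "q < b"
  obtains t where "t \<in> {q<..b}" "g t < g q"
proof -
  obtain e where "e > 0" and e: "\<And>k. 0 < k \<Longrightarrow> k < e \<Longrightarrow> g (q + k) < g q"
    using DERIV_neg_dec_right[OF assms(1,2)] by blast
  define k where "k = min (e / 2) (b - q)"
  have "0 < k" "k < e" "q + k \<in> {q<..b}"
    using \<open>e > 0\<close> \<open>q < b\<close> by (auto simp: k_def)
  then show thesis
    using e that by blast
qed

lemma abs_continuous_negative_derivative_imp_le:
  fixes g :: "real \<Rightarrow> real"
  assumes "a \<le> b" and g: "abs_continuous_on_interval g a b" and "negligible N"
    and deriv: "\<And>t. a < t \<Longrightarrow> t < b \<Longrightarrow> t \<notin> N \<Longrightarrow> \<exists>d<0. (g has_real_derivative d) (at t)"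
  shows "g b \<le> g a"
proof (rule ccontr)
  assume "\<not> g b \<le> g a"
  define y1 where "y1 = (2 * g a + g b) / 3"
  define y2 where "y2 = (g a + 2 * g b) / 3"
  have y: "g a < y1" "y1 < y2" "y2 < g b" and "a < b"
    using \<open>\<not> g b \<le> g a\<close> \<open>a \<le> b\<close> by (auto simp: y1_def y2_def less_le)
  have cont: "continuous_on {a..b} g"
    using g by (rule abs_continuous_on_interval_imp_continuous_on)
  \<comment> \<open>Right minima cannot have negative derivative, so \<open>Q \<subseteq> N\<close>; yet \<open>g\<close> maps \<open>Q\<close> onto
    \<open>{y1..y2}\<close>, which contradicts the fact that \<open>g\<close> maps compact null sets to null sets.\<close>
  define R where "R = {q\<in>{a..b}. \<forall>t\<in>{q..b}. g q \<le> g t}"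
  define Q where "Q = R \<inter> ({a..b} \<inter> g -` {y1..y2})"
  have "Q \<subseteq> {a..b}"
    by (auto simp: Q_def)
  moreover have "closed Q"
    unfolding Q_def R_def
    by (intro closed_Int closed_right_minima cont continuous_closed_preimage) auto
  ultimately have "compact Q"
    by (meson bounded_closed_interval bounded_subset compact_eq_bounded_closed)
  have "{y1..y2} \<subseteq> g ` Q"
  proof
    fix y assume "y \<in> {y1..y2}"
    then obtain s where s: "s \<in> {a..b}" "g s = y" "\<And>t. t \<in> {s<..b} \<Longrightarrow> y < g t"
      using continuous_on_last_crossing[OF cont \<open>a \<le> b\<close>, of y] y by auto
    then have "s \<in> Q"
      using \<open>y \<in> {y1..y2}\<close> by (force simp: Q_def R_def le_less)
    with s show "y \<in> g ` Q"
      by blast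
  qed
  moreover have "Q \<subseteq> N"
  proof
    fix q assume "q \<in> Q"
    then have "q \<in> R" "a < q" "q < b"
      using y by (auto simp: Q_def R_def le_less)
    show "q \<in> N"
    proof (rule ccontr)
      assume "q \<notin> N"
      then obtain d where "d < 0" "(g has_real_derivative d) (at q)"
        using deriv \<open>a < q\<close> \<open>q < b\<close> by blast
      then obtain t where "t \<in> {q<..b}" "g t < g q"
        using negative_derivative_imp_smaller_right \<open>q < b\<close> by blast
      moreover have "g q \<le> g t"
        using \<open>q \<in> R\<close> \<open>t \<in> {q<..b}\<close> unfolding R_def by simp
      ultimately show False
        by simp
    qed
  qed
  then have "negligible (g ` Q)"
    using negligible_abs_continuous_image[OF g \<open>compact Q\<close>] negligible_subset[OF \<open>negligible N\<close>]
      \<open>Q \<subseteq> {a..b}\<close> \<open>a < b\<close> by blast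
  ultimately have "negligible {y1..y2}"
    by (rule negligible_subset[rotated])
  then show False
    using \<open>y1 < y2\<close> negligible_interval(1)[of y1 y2] by simp
qed

lemma abs_continuous_nonpos_derivative_imp_le:
  fixes h :: "real \<Rightarrow> real"
  assumes "a \<le> b" and h: "abs_continuous_on_interval h a b" and "negligible N"
    and deriv: "\<And>t. a < t \<Longrightarrow> t < b \<Longrightarrow> t \<notin> N \<Longrightarrow> \<exists>d\<le>0. (h has_real_derivative d) (at t)"
  shows "h b \<le> h a"
proof (rule field_le_epsilon)
  fix e :: real assume "e > 0"
  define c where "c = e / (b - a + 1)"
  have "c > 0" "c * (b - a) \<le> e"
    using \<open>e > 0\<close> \<open>a \<le> b\<close> by (auto simp: c_def field_simps)
  have "h b + (- c) * b \<le> h a + (- c) * a"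
  proof (rule abs_continuous_negative_derivative_imp_le[OF \<open>a \<le> b\<close> _ \<open>negligible N\<close>])
    show "abs_continuous_on_interval (\<lambda>t. h t + - c * t) a b"
      using h by (rule abs_continuous_on_interval_add_linear)
    fix t assume "a < t" "t < b" "t \<notin> N"
    then obtain d where "d \<le> 0" "(h has_real_derivative d) (at t)"
      using deriv by blast
    then have "((\<lambda>t. h t + - c * t) has_real_derivative d - c) (at t)"
      by (auto intro!: derivative_eq_intros)
    then show "\<exists>d<0. ((\<lambda>t. h t + - c * t) has_real_derivative d) (at t)"
      using \<open>d \<le> 0\<close> \<open>c > 0\<close> by (intro exI[of _ "d - c"]) auto
  qed
  then show "h b \<le> h a + e"
    using \<open>c * (b - a) \<le> e\<close> by (simp add: algebra_simps)
qed

lemma has_vector_derivative_in_tangent_cone: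
  fixes f :: "real \<Rightarrow> 'a::real_normed_vector"
  assumes f: "(f has_vector_derivative v) (at t)" and "e > 0"
    and in_C: "\<And>\<tau>. 0 < \<tau> \<Longrightarrow> \<tau> \<le> e \<Longrightarrow> f (t + \<tau>) \<in> C"
  shows "v \<in> tangent_cone C (f t)"
proof -
  define \<tau> where "\<tau> i = e / real (Suc i)" for i
  have \<tau>_pos: "\<tau> i > 0" and \<tau>_le: "\<tau> i \<le> e" for i
    using \<open>e > 0\<close> by (auto simp: \<tau>_def field_simps)
  have "decseq \<tau>"
    unfolding decseq_def \<tau>_def using \<open>e > 0\<close> by (auto intro!: divide_left_mono)
  have "\<tau> \<longlonglongrightarrow> 0"
    using tendsto_mult[OF tendsto_const[of e] LIMSEQ_inverse_real_of_nat]
    unfolding \<tau>_def by (simp add: divide_inverse)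
  then have t_\<tau>: "(\<lambda>i. t + \<tau> i) \<longlonglongrightarrow> t"
    using tendsto_add[OF tendsto_const[of t]] by fastforce
  then have at_t: "filterlim (\<lambda>i. t + \<tau> i) (at t) sequentially"
    using \<tau>_pos by (auto simp: filterlim_at intro!: always_eventually) (metis less_irrefl)
  have "(\<lambda>i. f (t + \<tau> i)) \<longlonglongrightarrow> f t"
    using isCont_tendsto_compose[OF has_derivative_continuous[OF f[unfolded has_vector_derivative_def]] t_\<tau>] .
  moreover have "(\<lambda>i. (1 / \<tau> i) *\<^sub>R (f (t + \<tau> i) - f t)) \<longlonglongrightarrow> v"
  proof -
    have "((\<lambda>y. (1 / norm (y - t)) *\<^sub>R (f y - (f t + (y - t) *\<^sub>R v))) \<longlongrightarrow> 0) (at t)"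
      using f unfolding has_vector_derivative_def has_derivative_within[of f _ t UNIV] by simp
    from filterlim_compose[OF this at_t]
    have "(\<lambda>i. (1 / \<tau> i) *\<^sub>R (f (t + \<tau> i) - (f t + \<tau> i *\<^sub>R v))) \<longlonglongrightarrow> 0"
      using \<tau>_pos by (simp add: less_imp_le)
    then have "(\<lambda>i. (1 / \<tau> i) *\<^sub>R (f (t + \<tau> i) - (f t + \<tau> i *\<^sub>R v)) + v) \<longlonglongrightarrow> 0 + v"
      by (intro tendsto_add tendsto_const)
    moreover have "(1 / \<tau> i) *\<^sub>R (f (t + \<tau> i) - (f t + \<tau> i *\<^sub>R v)) + v = (1 / \<tau> i) *\<^sub>R (f (t + \<tau> i) - f t)" for i
      using \<tau>_pos[of i] by (simp add: algebra_simps)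
    ultimately show ?thesis
      by simp
  qed
  ultimately show ?thesis
    unfolding tangent_cone_def using in_C \<tau>_pos \<tau>_le \<open>decseq \<tau>\<close> \<open>\<tau> \<longlonglongrightarrow> 0\<close>
    by (intro CollectI exI[of _ "\<lambda>i. f (t + \<tau> i)"] exI[of _ \<tau>]) auto
qed

lemma gradient_chain_rule:
  assumes "(B has_derivative (\<lambda>h. g \<bullet> h)) (at (f t))" "(f has_vector_derivative v) (at t)"
  shows "((\<lambda>s. B (f s)) has_real_derivative (g \<bullet> v)) (at t)"
  using has_derivative_compose[OF assms(2)[unfolded has_vector_derivative_def] assms(1)]
  unfolding has_field_derivative_def by (simp add: mult.commute[of _ "g \<bullet> v"] fun_eq_iff)

lemma continuous_gradient_imp_lipschitz_on:
  fixes B :: "'a::euclidean_space \<Rightarrow> real"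
  assumes "compact S" "convex S"
    and deriv: "\<And>x. x \<in> S \<Longrightarrow> (B has_derivative (\<lambda>h. g x \<bullet> h)) (at x)"
    and "continuous_on S g"
  obtains M where "M-lipschitz_on S B"
proof -
  have "bounded (g ` S)"
    using compact_continuous_image[OF \<open>continuous_on S g\<close> \<open>compact S\<close>] by (rule compact_imp_bounded)
  then obtain M where "M \<ge> 0" and M: "\<And>x. x \<in> S \<Longrightarrow> norm (g x) \<le> M"
    by (metis bounded_pos image_eqI less_eq_real_def)
  have "onorm (\<lambda>h. g x \<bullet> h) \<le> M" if "x \<in> S" for x
  proof (rule onorm_le)
    fix h
    have "norm (g x \<bullet> h) \<le> norm (g x) * norm h"
      by (simp add: Cauchy_Schwarz_ineq2)
    also have "\<dots> \<le> M * norm h"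
      using M[OF that] by (intro mult_right_mono) auto
    finally show "norm (g x \<bullet> h) \<le> M * norm h" .
  qed
  then have "M-lipschitz_on S B"
    using deriv \<open>M \<ge> 0\<close> \<open>convex S\<close>
    by (intro bounded_derivative_imp_lipschitz[where f'="\<lambda>x h. g x \<bullet> h"]) (auto intro: has_derivative_at_withinI)
  then show thesis ..
qed

lemma last_exit_from_closed:
  fixes f :: "real \<Rightarrow> 'a::metric_space"
  assumes f: "continuous_on {a..t1} f" and "a \<le> t1" "closed K" "f a \<in> K" "f t1 \<notin> K"
  obtains s where "a \<le> s" "s < t1" "f s \<in> frontier K" "\<And>t. s < t \<Longrightarrow> t \<le> t1 \<Longrightarrow> f t \<notin> K"
proof -
  define P where "P = {a..t1} \<inter> f -` K"
  have "closed P"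
    unfolding P_def using f \<open>closed K\<close> by (intro continuous_closed_preimage) auto
  moreover have "a \<in> P" "bdd_above P"
    using assms by (auto simp: P_def intro: bdd_aboveI[of _ t1])
  ultimately have "Sup P \<in> P" and Sup_upper: "\<And>t. t \<in> P \<Longrightarrow> t \<le> Sup P"
    using closed_contains_Sup cSup_upper by blast+
  define s where "s = Sup P"
  have s: "a \<le> s" "s \<le> t1" "f s \<in> K"
    using \<open>Sup P \<in> P\<close> by (auto simp: s_def P_def)
  have after: "f t \<notin> K" if "s < t" "t \<le> t1" for t
    using that s Sup_upper[of t] by (auto simp: s_def P_def)
  have "s < t1"
    using s \<open>f t1 \<notin> K\<close> by (auto simp: le_less)
  have "f s \<notin> interior K"
  proof
    assume "f s \<in> interior K"
    then obtain e where "e > 0" "ball (f s) e \<subseteq> K"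
      using mem_interior by blast
    moreover obtain d where "d > 0" and d: "\<And>t. t \<in> {a..t1} \<Longrightarrow> dist t s < d \<Longrightarrow> dist (f t) (f s) < e"
      using f s \<open>e > 0\<close> unfolding continuous_on_iff by (meson atLeastAtMost_iff)
    define t where "t = s + min (d / 2) (t1 - s)"
    have "s < t" "t \<le> t1" "dist (f t) (f s) < e"
      using \<open>d > 0\<close> \<open>s < t1\<close> s by (auto simp: t_def dist_real_def intro!: d)
    ultimately show False
      using after[of t] by (auto simp: dist_commute subset_iff)
  qed
  then have "f s \<in> frontier K"
    using s \<open>closed K\<close> by (simp add: frontier_def)
  with s \<open>s < t1\<close> after that show thesis
    by blast
qed

lemma continuous_on_right_neighbourhood_in_cball:
  fixes f :: "real \<Rightarrow> 'a::metric_space"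
  assumes f: "continuous_on {a..b} f" and "a \<le> s" "s < b" "\<rho> > 0"
  obtains s' where "s < s'" "s' < b" "f ` {s..s'} \<subseteq> cball (f s) \<rho>"
proof -
  obtain d where "d > 0" and d: "\<And>t. t \<in> {a..b} \<Longrightarrow> dist t s < d \<Longrightarrow> dist (f t) (f s) < \<rho>"
    using f assms(2-4) unfolding continuous_on_iff by (meson atLeastAtMost_iff less_imp_le)
  define s' where "s' = s + min (d / 2) ((b - s) / 2)"
  have "s < s'" "s' < b"
    using \<open>d > 0\<close> \<open>s < b\<close> by (auto simp: s'_def min_def field_simps)
  moreover have "f t \<in> cball (f s) \<rho>" if "t \<in> {s..s'}" for t
  proof -
    have "t \<in> {a..b}" "dist t s < d"
      using that \<open>s' < b\<close> \<open>a \<le> s\<close> \<open>d > 0\<close> by (auto simp: s'_def dist_real_def)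
    then show ?thesis
      using d[of t] by (simp add: dist_commute)
  qed
  ultimately show thesis
    using that by blast
qed

lemma barrier_nonincreasing_along_flow:
  fixes f :: "real \<Rightarrow> 'a::euclidean_space"
  assumes "s \<le> s'" and AC: "abs_continuous_on_interval (\<lambda>t. B (f t)) s s'" and "negligible N"
    and flow: "\<And>t. t \<in> {s<..<s'} - N \<Longrightarrow> \<exists>v. (f has_vector_derivative v) (at t) \<and> v \<in> F (f t)"
    and region: "\<And>t. t \<in> {s<..<s'} \<Longrightarrow> f t \<in> C \<inter> (U - K) \<inter> W"
    and B_deriv: "\<And>x. x \<in> W \<Longrightarrow> (B has_derivative (\<lambda>h. gradB x \<bullet> h)) (at x)"
    and barrier: "\<And>x \<eta>. x \<in> C \<inter> (U - K) \<Longrightarrow> \<eta> \<in> F x \<inter> tangent_cone C x \<Longrightarrow> gradB x \<bullet> \<eta> \<le> 0"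
  shows "B (f s') \<le> B (f s)"
proof (rule abs_continuous_nonpos_derivative_imp_le[OF \<open>s \<le> s'\<close> AC \<open>negligible N\<close>])
  fix t assume "s < t" "t < s'" "t \<notin> N"
  then obtain v where v: "(f has_vector_derivative v) (at t)" "v \<in> F (f t)"
    using flow by auto
  have "v \<in> tangent_cone C (f t)"
  proof (rule has_vector_derivative_in_tangent_cone[OF v(1)])
    show "(s' - t) / 2 > 0"
      using \<open>t < s'\<close> by simp
    show "f (t + \<tau>) \<in> C" if "0 < \<tau>" "\<tau> \<le> (s' - t) / 2" for \<tau>
      using region[of "t + \<tau>"] that \<open>s < t\<close> by auto
  qed
  then have "gradB (f t) \<bullet> v \<le> 0"
    using barrier region \<open>s < t\<close> \<open>t < s'\<close> v(2) by auto
  moreover have "((\<lambda>t. B (f t)) has_real_derivative gradB (f t) \<bullet> v) (at t)"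
    using gradient_chain_rule[OF B_deriv v(1)] region \<open>s < t\<close> \<open>t < s'\<close> by auto
  ultimately show "\<exists>d\<le>0. ((\<lambda>t. B (f t)) has_real_derivative d) (at t)"
    by blast
qed

lemma barrier_flow_invariant:
  fixes f :: "real \<Rightarrow> 'a::euclidean_space"
  assumes "a \<le> b" and AC: "locally_abs_continuous_on {a..b} f"
    and in_C: "\<And>t. t \<in> {a<..<b} \<Longrightarrow> f t \<in> C"
    and "negligible N"
    and flow: "\<And>t. t \<in> {a<..<b} - N \<Longrightarrow> \<exists>v. (f has_vector_derivative v) (at t) \<and> v \<in> F (f t)"
    and "closed K" "K \<subseteq> W" "open W"
    and B_deriv: "\<And>x. x \<in> W \<Longrightarrow> (B has_derivative (\<lambda>h. gradB x \<bullet> h)) (at x)"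
    and "continuous_on W gradB"
    and B_nonpos: "\<And>x. x \<in> K \<Longrightarrow> B x \<le> 0" and B_pos: "\<And>x. x \<in> C - K \<Longrightarrow> 0 < B x"
    and "open U" "frontier K \<subseteq> U"
    and barrier: "\<And>x \<eta>. x \<in> C \<inter> (U - K) \<Longrightarrow> \<eta> \<in> F x \<inter> tangent_cone C x \<Longrightarrow> gradB x \<bullet> \<eta> \<le> 0"
    and "f a \<in> K"
  shows "f ` {a..b} \<subseteq> K"
proof (rule ccontr)
  assume "\<not> f ` {a..b} \<subseteq> K"
  then obtain t1 where "t1 \<in> {a..b}" "f t1 \<notin> K"
    by blast
  have AC_sub: "abs_continuous_on_interval f c d" if "a \<le> c" "c \<le> d" "d \<le> b" for c d
    using AC that unfolding locally_abs_continuous_on_def by auto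
  have cont: "continuous_on {a..t1} f"
    using AC_sub \<open>t1 \<in> {a..b}\<close> by (auto intro: abs_continuous_on_interval_imp_continuous_on)
  obtain s where s: "a \<le> s" "s < t1" "f s \<in> frontier K" and after: "\<And>t. s < t \<Longrightarrow> t \<le> t1 \<Longrightarrow> f t \<notin> K"
    using last_exit_from_closed[OF cont _ \<open>closed K\<close> \<open>f a \<in> K\<close> \<open>f t1 \<notin> K\<close>] \<open>t1 \<in> {a..b}\<close> by auto
  have "f s \<in> W \<inter> U"
    using s(3) \<open>closed K\<close> \<open>K \<subseteq> W\<close> \<open>frontier K \<subseteq> U\<close> frontier_subset_closed by blast
  then obtain \<rho> where "\<rho> > 0" and ball: "cball (f s) \<rho> \<subseteq> W \<inter> U"
    using open_contains_cball \<open>open W\<close> \<open>open U\<close> by (metis open_Int)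
  obtain s' where "s < s'" "s' < t1" and near: "f ` {s..s'} \<subseteq> cball (f s) \<rho>"
    using continuous_on_right_neighbourhood_in_cball[OF cont _ \<open>s < t1\<close> \<open>\<rho> > 0\<close>] s by auto
  have "continuous_on (cball (f s) \<rho>) gradB"
    using continuous_on_subset[OF \<open>continuous_on W gradB\<close>] ball by blast
  moreover have "\<And>x. x \<in> cball (f s) \<rho> \<Longrightarrow> (B has_derivative (\<lambda>h. gradB x \<bullet> h)) (at x)"
    using B_deriv ball by blast
  ultimately obtain M where "M-lipschitz_on (cball (f s) \<rho>) B"
    using continuous_gradient_imp_lipschitz_on[OF compact_cball convex_cball] by metis
  have interior: "a < t" "t < b" if "t \<in> {s<..s'}" for t
    using that s \<open>s' < t1\<close> \<open>t1 \<in> {a..b}\<close> by auto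
  have "abs_continuous_on_interval (\<lambda>t. B (f t)) s s'"
  proof (rule abs_continuous_on_interval_compose_lipschitz[where f = f and g = B])
    show "abs_continuous_on_interval f s s'"
      using AC_sub[of s s'] s \<open>s < s'\<close> \<open>s' < t1\<close> \<open>t1 \<in> {a..b}\<close> by auto
    show "f ` {s..s'} \<subseteq> cball (f s) \<rho>"
      by (fact near)
  qed fact
  then have "B (f s') \<le> B (f s)"
  proof (rule barrier_nonincreasing_along_flow[OF less_imp_le[OF \<open>s < s'\<close>] _ \<open>negligible N\<close> _ _ B_deriv barrier])
    show "\<exists>v. (f has_vector_derivative v) (at t) \<and> v \<in> F (f t)" if "t \<in> {s<..<s'} - N" for t
      using flow interior[of t] that by auto
    show "f t \<in> C \<inter> (U - K) \<inter> W" if "t \<in> {s<..<s'}" for t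
    proof -
      have "f t \<in> C" "f t \<notin> K"
        using in_C after interior[of t] that \<open>s' < t1\<close> by auto
      moreover have "f t \<in> W \<inter> U"
        using near ball that by force
      ultimately show ?thesis
        by blast
    qed
  qed
  moreover have "B (f s) \<le> 0"
    using B_nonpos s(3) \<open>closed K\<close> frontier_subset_closed by blast
  moreover have "0 < B (f s')"
    using B_pos in_C[of s'] after[of s'] interior[of s'] \<open>s < s'\<close> \<open>s' < t1\<close> by auto
  ultimately show False
    by linarith
qed

lemma hybrid_time_domain_induct:
  assumes E: "hybrid_time_domain E" and "(t, j) \<in> E"
    and init: "P 0 0"
    and flow: "\<And>a b j. a \<le> b \<Longrightarrow> {a..b} \<subseteq> time_slice E j \<Longrightarrow> P a j \<Longrightarrow> P b j"
    and jump: "\<And>t j. (t, j) \<in> E \<Longrightarrow> (t, Suc j) \<in> E \<Longrightarrow> P t j \<Longrightarrow> P t (Suc j)"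
  shows "P t j"
proof -
  obtain \<tau> :: "nat \<Rightarrow> real" where "\<tau> 0 = 0" and mono: "\<And>i. i \<le> j \<Longrightarrow> \<tau> i \<le> \<tau> (Suc i)"
    and E_eq: "E \<inter> ({0..t} \<times> {0..j}) = (\<Union>i\<in>{0..j}. {\<tau> i..\<tau> (Suc i)} \<times> {i})"
    using E \<open>(t, j) \<in> E\<close> unfolding hybrid_time_domain_def by fastforce
  have slice: "{\<tau> i..\<tau> (Suc i)} \<subseteq> time_slice E i" if "i \<le> j" for i
    using E_eq that by (auto simp: time_slice_def)
  have "P s i" if "i \<le> j" "s \<in> {\<tau> i..\<tau> (Suc i)}" for i s
    using that
  proof (induction i arbitrary: s)
    case 0
    show ?case
    proof -
      have "{0..s} \<subseteq> time_slice E 0"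
        using slice[of 0] 0 \<open>\<tau> 0 = 0\<close> by auto
      then show ?thesis
        using flow[OF _ _ init] 0 \<open>\<tau> 0 = 0\<close> by auto
    qed
  next
    case (Suc i)
    have "P (\<tau> (Suc i)) i"
      using Suc.IH[of "\<tau> (Suc i)"] Suc.prems mono[of i] by auto
    moreover have "\<tau> (Suc i) \<in> {\<tau> i..\<tau> (Suc i)}" "\<tau> (Suc i) \<in> {\<tau> (Suc i)..\<tau> (Suc (Suc i))}"
      using Suc.prems mono[of i] by auto
    then have "(\<tau> (Suc i), i) \<in> E" "(\<tau> (Suc i), Suc i) \<in> E"
      using slice[of i] slice[of "Suc i"] Suc.prems Suc_leD unfolding time_slice_def by blast+
    ultimately have "P (\<tau> (Suc i)) (Suc i)"
      by (rule jump[rotated 2])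
    then show ?case
      using flow[of "\<tau> (Suc i)" s "Suc i"] slice[of "Suc i"] Suc.prems by force
  qed
  moreover have "0 \<le> t"
  proof -
    have "(0, 0) \<in> E \<inter> ({0..t} \<times> {0..j})"
      unfolding E_eq using \<open>\<tau> 0 = 0\<close> mono[of 0] by force
    then show ?thesis
      by auto
  qed
  then have "(t, j) \<in> (\<Union>i\<in>{0..j}. {\<tau> i..\<tau> (Suc i)} \<times> {i})"
    using \<open>(t, j) \<in> E\<close> unfolding E_eq[symmetric] by auto
  then have "t \<in> {\<tau> j..\<tau> (Suc j)}"
    by blast
  ultimately show ?thesis
    by blast
qed

lemma solution_flow_invariant:
  assumes sol: "is_solution C F D G E \<phi>"
    and "closed K" "K \<subseteq> W" "open W"
    and B_deriv: "\<And>x. x \<in> W \<Longrightarrow> (B has_derivative (\<lambda>h. gradB x \<bullet> h)) (at x)"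
    and "continuous_on W gradB"
    and B_nonpos: "\<And>x. x \<in> K \<Longrightarrow> B x \<le> 0" and B_pos: "\<And>x. x \<in> C - K \<Longrightarrow> 0 < B x"
    and "open U" "frontier K \<subseteq> U"
    and barrier: "\<And>x \<eta>. x \<in> C \<inter> (U - K) \<Longrightarrow> \<eta> \<in> F x \<inter> tangent_cone C x \<Longrightarrow> gradB x \<bullet> \<eta> \<le> 0"
    and "a \<le> b" and slice: "{a..b} \<subseteq> time_slice E j" and "\<phi> a j \<in> K"
  shows "\<phi> b j \<in> K"
proof (cases "a = b")
  case False
  then have "{a<..<b} \<subseteq> interior (time_slice E j)"
    using interior_mono[OF slice] by simp
  then have "interior (time_slice E j) \<noteq> {}"
    using False \<open>a \<le> b\<close> by auto
  then obtain N where in_C: "\<forall>t\<in>interior (time_slice E j). \<phi> t j \<in> C" and "negligible N"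
    and deriv: "\<forall>t\<in>time_slice E j - N. \<exists>v. ((\<lambda>s. \<phi> s j) has_vector_derivative v) (at t within time_slice E j)
      \<and> v \<in> F (\<phi> t j)"
    using sol unfolding is_solution_def by blast
  have "(\<lambda>t. \<phi> t j) ` {a..b} \<subseteq> K"
  proof (rule barrier_flow_invariant[where f = "\<lambda>t. \<phi> t j", OF \<open>a \<le> b\<close> _ _ \<open>negligible N\<close> _ \<open>closed K\<close> \<open>K \<subseteq> W\<close> \<open>open W\<close>
        B_deriv \<open>continuous_on W gradB\<close> B_nonpos B_pos \<open>open U\<close> \<open>frontier K \<subseteq> U\<close> barrier \<open>\<phi> a j \<in> K\<close>])
    have "locally_abs_continuous_on (time_slice E j) (\<lambda>t. \<phi> t j)"
      using sol by (simp add: is_solution_def hybrid_arc_def)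
    then show "locally_abs_continuous_on {a..b} (\<lambda>t. \<phi> t j)"
      using slice unfolding locally_abs_continuous_on_def by (meson subset_trans)
    show "\<phi> t j \<in> C" if "t \<in> {a<..<b}" for t
      using in_C that \<open>{a<..<b} \<subseteq> interior (time_slice E j)\<close> by blast
    show "\<exists>v. ((\<lambda>t. \<phi> t j) has_vector_derivative v) (at t) \<and> v \<in> F (\<phi> t j)" if "t \<in> {a<..<b} - N" for t
    proof -
      have t: "t \<in> interior (time_slice E j)"
        using that \<open>{a<..<b} \<subseteq> interior (time_slice E j)\<close> by blast
      then have "t \<in> time_slice E j - N"
        using that interior_subset by blast
      then show ?thesis
        using deriv at_within_interior[OF t] by metis
    qed
  qed
  then show ?thesis
    using \<open>a \<le> b\<close> by auto
qed (use \<open>\<phi> a j \<in> K\<close> in simp)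

lemma solution_stays_in_barrier_set:
  assumes sol: "is_solution C F D G E \<phi>" and "\<phi> 0 0 \<in> K" and "(t, j) \<in> E"
    and "closed K" "K \<subseteq> W" "open W"
    and B_deriv: "\<And>x. x \<in> W \<Longrightarrow> (B has_derivative (\<lambda>h. gradB x \<bullet> h)) (at x)"
    and "continuous_on W gradB"
    and B_nonpos: "\<And>x. x \<in> K \<Longrightarrow> B x \<le> 0" and B_pos: "\<And>x. x \<in> (C \<union> D) - K \<Longrightarrow> 0 < B x"
    and "open U" "frontier K \<subseteq> U"
    and barrier: "\<And>x \<eta>. x \<in> C \<inter> (U - K) \<Longrightarrow> \<eta> \<in> F x \<inter> tangent_cone C x \<Longrightarrow> gradB x \<bullet> \<eta> \<le> 0"
    and jump_nonpos: "\<And>x \<eta>. x \<in> D \<inter> K \<Longrightarrow> \<eta> \<in> G x \<Longrightarrow> B \<eta> \<le> 0"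
    and jump_lands: "\<And>x \<eta>. x \<in> D \<inter> K \<Longrightarrow> \<eta> \<in> G x \<Longrightarrow> \<eta> \<in> C \<union> D"
  shows "\<phi> t j \<in> K"
proof (rule hybrid_time_domain_induct[where P = "\<lambda>t j. \<phi> t j \<in> K", OF _ \<open>(t, j) \<in> E\<close> \<open>\<phi> 0 0 \<in> K\<close>])
  show "hybrid_time_domain E"
    using sol by (simp add: is_solution_def hybrid_arc_def)
  show "\<phi> b j \<in> K" if "a \<le> b" "{a..b} \<subseteq> time_slice E j" "\<phi> a j \<in> K" for a b j
    using B_pos by (intro solution_flow_invariant[OF sol \<open>closed K\<close> \<open>K \<subseteq> W\<close> \<open>open W\<close> B_deriv
        \<open>continuous_on W gradB\<close> B_nonpos _ \<open>open U\<close> \<open>frontier K \<subseteq> U\<close> barrier that]) auto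
  show "\<phi> t (Suc j) \<in> K" if "(t, j) \<in> E" "(t, Suc j) \<in> E" "\<phi> t j \<in> K" for t j
  proof -
    have "\<phi> t j \<in> D \<inter> K" "\<phi> t (Suc j) \<in> G (\<phi> t j)"
      using sol that unfolding is_solution_def by auto
    then show ?thesis
      using jump_nonpos jump_lands B_pos by force
  qed
qed

theorem theorem1:
  fixes X C D :: "'a::euclidean_space set"
    and F G :: "'a \<Rightarrow> 'a set"
    and p :: "'a \<Rightarrow> bool"
    and B :: "'a \<Rightarrow> real" and gradB :: "'a \<Rightarrow> 'a"
    and U :: "'a set"
  assumes XC: "C \<subseteq> X" and XD: "D \<subseteq> X"
    and domF: "C \<subseteq> sv_dom F" and domG: "D \<subseteq> sv_dom G"
    and inX: "closure C \<union> D \<union> \<Union>(G ` D) \<subseteq> X"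
    and Fmap: "\<forall>x\<in>X. F x \<subseteq> X" and Gmap: "\<forall>x\<in>X. G x \<subseteq> X"
    and F_osc: "outer_semicontinuous_on X F"
    and F_lb: "locally_bounded_on X F"
    and F_vals: "\<forall>x\<in>C. F x \<noteq> {} \<and> convex (F x)"
    and G_vals: "\<forall>x\<in>D. G x \<noteq> {}"
    and K_closed: "closed {x\<in>X. p x}"
    and K_ne: "{x\<in>X. p x} \<noteq> {}"
    and K_sub: "{x\<in>X. p x} \<subseteq> C \<union> D"
    and B_C1: "C1_with_gradient X B gradB"
    and B_cand: "barrier_candidate C D G {x\<in>X. p x} B"
    and U_open: "open U" and U_nbhd: "frontier {x\<in>X. p x} \<subseteq> U"
    and cond1: "\<forall>x\<in>C \<inter> (U - {x\<in>X. p x}). \<forall>\<eta>\<in>F x \<inter> tangent_cone C x. gradB x \<bullet> \<eta> \<le> 0"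
    and cond2: "\<forall>x\<in>D \<inter> {x\<in>X. p x}. \<forall>\<eta>\<in>G x. B \<eta> \<le> 0"
    and cond3: "\<Union>(G ` (D \<inter> {x\<in>X. p x})) \<subseteq> C \<union> D"
  shows "\<forall>E \<phi>. is_solution C F D G E \<phi> \<and> p (\<phi> 0 0) \<longrightarrow>
           (\<forall>tj\<in>E. models_always E \<phi> tj p)"
proof (intro allI impI ballI)
  fix E \<phi> tj assume sol: "is_solution C F D G E \<phi> \<and> p (\<phi> 0 0)"
  obtain W where W: "open W" "X \<subseteq> W" "\<And>x. x \<in> W \<Longrightarrow> (B has_derivative (\<lambda>h. gradB x \<bullet> h)) (at x)"
    "continuous_on W gradB"
    using B_C1 unfolding C1_with_gradient_def by blast
  have "\<phi> 0 0 \<in> {x\<in>X. p x}"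
    using sol inX by (auto simp: is_solution_def)
  then have "\<phi> t j \<in> {x\<in>X. p x}" if "(t, j) \<in> E" for t j
  proof (rule solution_stays_in_barrier_set[OF conjunct1[OF sol] _ that K_closed _ W(1,3,4) _ _ U_open U_nbhd])
    show "{x\<in>X. p x} \<subseteq> W"
      using W(2) by blast
  qed (use B_cand cond1 cond2 cond3 in \<open>auto simp: barrier_candidate_def\<close>)
  then show "models_always E \<phi> tj p"
    unfolding models_always_def by blast
qed

end
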